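(* Let $0\le b\le1$ and $0\le\alpha<1$, and let $r_0=r_0(\alpha)$ be the real root in $(0,1)$ of the equation \[2\big(1-\alpha+2(2-\alpha)(1-b)r\big)(1-r)^4=1-\alpha+4r+(1+\alpha)r^2.\] Let $\mathcal{F}$ be the class of functions $f\in\mathcal{A}_b$, $f(z)=z+\sum_{n\ge2}a_nz^n$, with $|a_n|\le n$ for all $n\ge3$. Then: (i) every $f\in\mathcal{F}$ satisfies $\left|\frac{zf''(z)}{f'(z)}\right|\le1-\alpha$ for $|z|\le r_0$; (ii) $r_0(\alpha)$ is the radius of convexity of order $\alpha$ of $\mathcal{F}$; (iii) $r_0(1/2)$ is the radius of uniform convexity of $\mathcal{F}$. All results are sharp: the function $f_0(z)=2z+2(1-b)z^2-\frac{z}{(1-z)^2}=z-2bz^2-\sum_{n\ge3}nz^n$ belongs to $\mathcal{F}$ and satisfies $\left|\frac{zf_0''(z)}{f_0'(z)}\right|=1-\alpha$ and $\operatorname{Re}\frac{zf_0''(z)}{f_0'(z)}=\alpha-1$ at $z=r_0$.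
   Context: $\mathbb{D}=\{z\in\mathbb{C}:|z|<1\}$. For $0\le b\le1$, $\mathcal{A}_b$ is the class of analytic functions $f$ on $\mathbb{D}$ of the form $f(z)=z+a_2z^2+a_3z^3+\cdots$ with $|a_2|=2b$. For a class $\mathcal{F}$ of analytic functions on $\mathbb{D}$ normalized by $f(0)=0$, $f'(0)=1$, and $0\le\alpha<1$, the radius of convexity of order $\alpha$ of $\mathcal{F}$ is the supremum of $r\in(0,1]$ such that every $f\in\mathcal{F}$ satisfies $f'(z)\ne0$ and $\operatorname{Re}\big(1+zf''(z)/f'(z)\big)>\alpha$ for $|z|<r$. The radius of uniform convexity of $\mathcal{F}$ is the supremum of $r\in(0,1]$ such that every $f\in\mathcal{F}$ satisfies $f'(z)\ne0$ and $\operatorname{Re}\big(1+zf''(z)/f'(z)\big)>\left|zf''(z)/f'(z)\right|$ for $|z|<r$. *)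

theory Defs
  imports "HOL-Analysis.Analysis"
begin

definition taylor_coeff :: "(complex \<Rightarrow> complex) \<Rightarrow> nat \<Rightarrow> complex" where
  "taylor_coeff f n = (deriv ^^ n) f 0 / of_nat (fact n)"

definition class_A :: "real \<Rightarrow> (complex \<Rightarrow> complex) set" where
  "class_A b = {f. f holomorphic_on ball 0 1 \<and> f 0 = 0 \<and> deriv f 0 = 1 \<and>
                   cmod (taylor_coeff f 2) = 2 * b}"

definition class_F :: "real \<Rightarrow> (complex \<Rightarrow> complex) set" where
  "class_F b = {f \<in> class_A b. \<forall>n\<ge>3. cmod (taylor_coeff f n) \<le> real n}"

definition radius_convexity_order ::
  "real \<Rightarrow> (complex \<Rightarrow> complex) set \<Rightarrow> real" where
  "radius_convexity_order \<alpha> F = Sup {r \<in> {0<..1}. \<forall>f\<in>F. \<forall>z. cmod z < r \<longrightarrow>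
      deriv f z \<noteq> 0 \<and> Re (1 + z * deriv (deriv f) z / deriv f z) > \<alpha>}"

definition radius_uniform_convexity ::
  "(complex \<Rightarrow> complex) set \<Rightarrow> real" where
  "radius_uniform_convexity F = Sup {r \<in> {0<..1}. \<forall>f\<in>F. \<forall>z. cmod z < r \<longrightarrow>
      deriv f z \<noteq> 0 \<and>
      Re (1 + z * deriv (deriv f) z / deriv f z) > cmod (z * deriv (deriv f) z / deriv f z)}"

definition root_eq :: "real \<Rightarrow> real \<Rightarrow> real \<Rightarrow> bool" where
  "root_eq b \<alpha> r \<longleftrightarrow>
     2 * (1 - \<alpha> + 2 * (2 - \<alpha>) * (1 - b) * r) * (1 - r) ^ 4 = 1 - \<alpha> + 4 * r + (1 + \<alpha>) * r ^ 2"

definition f0 :: "real \<Rightarrow> complex \<Rightarrow> complex" where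
  "f0 b z = 2 * z + 2 * of_real (1 - b) * z ^ 2 - z / (1 - z) ^ 2"

end

theory Submission
  imports Defs "HOL-Complex_Analysis.Cauchy_Integral_Formula"
begin

(* The bounds |a_2| = 2b and |a_n| <= n say that every f in F is coefficientwise dominated by
   h(z) = z + 2b z^2 + sum_{n>=3} n z^n = z/(1-z)^2 - 2(1-b) z^2, and f0 = 2z - h.
   Comparing the series of f' and f'' termwise gives, for |z| <= r < 1,
   |f'(z)| >= 2 - h'(r) = f0'(r) and |f''(z)| <= h''(r) = -f0''(r),
   hence |z f''(z)/f'(z)| <= (|z|/r) * r h''(r) / (2 - h'(r)), with equality for f0 at z = r.
   Clearing the denominator (1-r)^4, the root equation is exactly r h''(r) = (1-alpha)(2 - h'(r)).
   So the ratio stays below 1 - alpha on |z| <= r0, strictly inside, which gives the convexity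
   of order alpha (and, for alpha = 1/2, uniform convexity because Re(1+w) > |w| once |w| < 1/2),
   while f0 attains z f0''/f0' = alpha - 1 at r0 and so shows that no larger radius works. *)

lemma sums_of_nat_mult_power:
  fixes z :: "'a::{real_normed_field,banach}"
  assumes "norm z < 1"
  shows "(\<lambda>n. of_nat n * z ^ n) sums (z / (1 - z)\<^sup>2)"
proof -
  have "(\<lambda>n. z * w ^ n) sums (z / (1 - w))" if "norm w < 1" for w :: 'a
    using sums_mult[OF geometric_sums[OF that], of z] by (simp add: divide_inverse)
  moreover have "((\<lambda>w. z / (1 - w)) has_field_derivative (z / (1 - z)\<^sup>2)) (at z)"
    using assms by (auto intro!: derivative_eq_intros simp: power2_eq_square)
  ultimately have "(\<lambda>n. diffs (\<lambda>_. z) n * z ^ n) sums (z / (1 - z)\<^sup>2)"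
    using assms by (intro termdiffs_sums_strong)
  then have "(\<lambda>n. of_nat (Suc n) * z ^ Suc n) sums (z / (1 - z)\<^sup>2)"
    by (simp add: diffs_def mult.assoc mult.left_commute)
  then show ?thesis
    by (subst (asm) sums_Suc_iff) simp
qed

lemma taylor_coeff_eqI:
  assumes "0 < R" and "\<And>z. norm z < R \<Longrightarrow> (\<lambda>n. c n * z ^ n) sums f z"
  shows "taylor_coeff f n = c n"
proof -
  have "(\<lambda>n. c n * of_real (R / 2) ^ n) sums f (of_real (R / 2))"
    using assms by (intro assms(2)) auto
  then have "norm (of_real (R / 2) :: complex) \<le> conv_radius c"
    by (intro conv_radius_geI sums_summable)
  then have "fps_conv_radius (Abs_fps c) > 0"
    using assms(1) by (auto simp: fps_conv_radius_def elim!: less_le_trans[rotated])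
  moreover have "eventually (\<lambda>z. z \<in> ball 0 R) (nhds (0::complex))"
    using assms(1) by (intro eventually_nhds_in_open) auto
  then have "eventually (\<lambda>z. eval_fps (Abs_fps c) z = f z) (nhds 0)"
    by eventually_elim (auto simp: eval_fps_def intro!: sums_unique[symmetric] assms(2))
  ultimately have "f has_fps_expansion Abs_fps c"
    by (auto simp: has_fps_expansion_def)
  from fps_nth_fps_expansion[OF this, of n] show ?thesis
    by (simp add: taylor_coeff_def)
qed

lemma taylor_series_deriv_sums:
  assumes holo: "f holomorphic_on ball 0 1" and z: "norm z < 1"
  shows "(\<lambda>n. diffs (taylor_coeff f) n * z ^ n) sums deriv f z"
    and "(\<lambda>n. diffs (diffs (taylor_coeff f)) n * z ^ n) sums deriv (deriv f) z"
proof -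
  have "(\<lambda>n. taylor_coeff f n * w ^ n) sums f w" if "norm w < 1" for w
    using holomorphic_power_series[OF holo, of w] that by (simp add: taylor_coeff_def)
  then have d1: "(\<lambda>n. diffs (taylor_coeff f) n * w ^ n) sums deriv f w" if "norm w < 1" for w
    using that by (intro termdiffs_sums_strong[where K = 1]) (auto intro!: holomorphic_derivI[OF holo])
  then show "(\<lambda>n. diffs (taylor_coeff f) n * z ^ n) sums deriv f z"
    using z .
  have "deriv f holomorphic_on ball 0 1"
    using holo by (rule holomorphic_deriv) auto
  then show "(\<lambda>n. diffs (diffs (taylor_coeff f)) n * z ^ n) sums deriv (deriv f) z"
    using z by (intro termdiffs_sums_strong[OF d1] holomorphic_derivI) auto
qed

lemma norm_diffs_le:
  fixes a :: "nat \<Rightarrow> 'a::real_normed_field"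
  assumes "\<And>n. 0 < n \<Longrightarrow> norm (a n) \<le> m n"
  shows "norm (diffs a n) \<le> diffs m n"
proof -
  have "norm (diffs a n) = of_nat (Suc n) * norm (a (Suc n))"
    unfolding diffs_def norm_mult norm_of_nat ..
  then show ?thesis
    using assms[of "Suc n"] by (simp add: diffs_def mult_left_mono del: of_nat_Suc)
qed

lemma deriv_bounds_of_coeff_majorant:
  fixes f :: "complex \<Rightarrow> complex" and m :: "nat \<Rightarrow> real"
  assumes holo: "f holomorphic_on ball 0 1" and f1: "deriv f 0 = 1" and m1: "m 1 = 1"
    and coeff: "\<And>n. 2 \<le> n \<Longrightarrow> cmod (taylor_coeff f n) \<le> m n"
    and z: "cmod z \<le> r" "r < 1"
    and M1: "(\<lambda>n. diffs m n * r ^ n) sums M1"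
    and M2: "(\<lambda>n. diffs (diffs m) n * r ^ n) sums M2"
  shows "2 - M1 \<le> cmod (deriv f z)" and "cmod (deriv (deriv f) z) \<le> M2"
proof -
  let ?a = "taylor_coeff f"
  have "?a 1 = 1"
    using f1 by (simp add: taylor_coeff_def)
  then have "cmod (?a n) \<le> m n" if "1 \<le> n" for n
    using coeff[of n] that m1 by (cases "n = 1") auto
  then have d1: "norm (diffs ?a n) \<le> diffs m n" for n
    by (intro norm_diffs_le) auto
  then have d2: "norm (diffs (diffs ?a) n) \<le> diffs (diffs m) n" for n
    by (rule norm_diffs_le)
  have term_le: "norm (c n * z ^ n) \<le> M n * r ^ n" if "norm (c n) \<le> M n" for c M n
  proof -
    have "norm (c n * z ^ n) = norm (c n) * norm z ^ n"
      by (simp add: norm_mult norm_power)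
    also have "\<dots> \<le> M n * r ^ n"
      using that z order_trans[OF norm_ge_zero that] by (intro mult_mono power_mono) auto
    finally show ?thesis .
  qed
  have "cmod z < 1"
    using z by linarith
  note series = taylor_series_deriv_sums[OF holo this]
  have "(\<lambda>n. diffs ?a (Suc n) * z ^ Suc n) sums (deriv f z - 1)"
    using series(1) \<open>?a 1 = 1\<close> by (subst sums_Suc_iff) (auto simp: diffs_def)
  moreover have "(\<lambda>n. diffs m (Suc n) * r ^ Suc n) sums (M1 - 1)"
    using M1 m1 by (subst sums_Suc_iff) (auto simp: diffs_def)
  ultimately have "cmod (deriv f z - 1) \<le> M1 - 1"
    using term_le[OF d1] by (rule norm_sums_le)
  then show "2 - M1 \<le> cmod (deriv f z)"
    using norm_triangle_ineq2[of 1 "deriv f z"] norm_minus_commute[of 1 "deriv f z"] by simp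
  show "cmod (deriv (deriv f) z) \<le> M2"
    using series(2) M2 term_le[OF d2] by (rule norm_sums_le)
qed

definition coeff_bound :: "real \<Rightarrow> nat \<Rightarrow> real" where
  "coeff_bound b n = (if n = 2 then 2 * b else real n)"

definition majorant :: "real \<Rightarrow> 'a::real_normed_field \<Rightarrow> 'a" where
  "majorant b z = z / (1 - z)\<^sup>2 - 2 * of_real (1 - b) * z\<^sup>2"

definition majorant' :: "real \<Rightarrow> 'a::real_normed_field \<Rightarrow> 'a" where
  "majorant' b z = (1 + z) / (1 - z) ^ 3 - 4 * of_real (1 - b) * z"

definition majorant'' :: "real \<Rightarrow> 'a::real_normed_field \<Rightarrow> 'a" where
  "majorant'' b z = (4 + 2 * z) / (1 - z) ^ 4 - 4 * of_real (1 - b)"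

lemma sums_majorant:
  fixes z :: "'a::{real_normed_field,banach}"
  assumes "norm z < 1"
  shows "(\<lambda>n. of_real (coeff_bound b n) * z ^ n) sums majorant b z"
proof -
  have "(\<lambda>n. of_nat n * z ^ n - (if n = 2 then 2 * of_real (1 - b) * z ^ n else 0))
      sums (z / (1 - z)\<^sup>2 - 2 * of_real (1 - b) * z\<^sup>2)"
    by (intro sums_diff sums_of_nat_mult_power assms sums_single)
  moreover have "of_real (coeff_bound b n) * z ^ n
      = of_nat n * z ^ n - (if n = 2 then 2 * of_real (1 - b) * z ^ n else 0)" for n
    by (simp add: coeff_bound_def algebra_simps)
  ultimately show ?thesis
    by (simp add: majorant_def)
qed

lemma has_field_derivative_majorant:
  fixes z :: "'a::real_normed_field"
  assumes "z \<noteq> 1"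
  shows "(majorant b has_field_derivative majorant' b z) (at z)"
proof -
  have "1 - z \<noteq> 0"
    using assms by simp
  then show ?thesis
    unfolding majorant_def[abs_def] majorant'_def
    by (auto intro!: derivative_eq_intros) (simp add: field_simps; simp add: algebra_simps eval_nat_numeral)
qed

lemma has_field_derivative_majorant':
  fixes z :: "'a::real_normed_field"
  assumes "z \<noteq> 1"
  shows "(majorant' b has_field_derivative majorant'' b z) (at z)"
proof -
  have "1 - z \<noteq> 0"
    using assms by simp
  then show ?thesis
    unfolding majorant'_def[abs_def] majorant''_def
    by (auto intro!: derivative_eq_intros) (simp add: field_simps; simp add: algebra_simps eval_nat_numeral)
qed

lemma sums_majorant':
  fixes r :: real
  assumes "\<bar>r\<bar> < 1"
  shows "(\<lambda>n. diffs (coeff_bound b) n * r ^ n) sums majorant' b r"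
  by (rule termdiffs_sums_strong[where K = 1, OF _ has_field_derivative_majorant])
    (use assms sums_majorant[where 'a = real] in auto)

lemma sums_majorant'':
  fixes r :: real
  assumes "\<bar>r\<bar> < 1"
  shows "(\<lambda>n. diffs (diffs (coeff_bound b)) n * r ^ n) sums majorant'' b r"
  by (rule termdiffs_sums_strong[where K = 1, OF _ has_field_derivative_majorant'])
    (use assms sums_majorant' in auto)

lemma f0_eq_majorant: "f0 b z = 2 * z - majorant b z"
  by (simp add: f0_def majorant_def)

lemma taylor_coeff_f0:
  "taylor_coeff (f0 b) n = (if n = 1 then 2 else 0) - of_real (coeff_bound b n)"
proof (rule taylor_coeff_eqI[where R = 1])
  fix z :: complex
  assume "norm z < 1"
  then have "(\<lambda>n. (if n = 1 then 2 * z ^ n else 0) - of_real (coeff_bound b n) * z ^ n)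
      sums (2 * z ^ 1 - majorant b z)"
    by (intro sums_diff sums_single sums_majorant)
  moreover have "((if n = 1 then 2 else 0) - of_real (coeff_bound b n)) * z ^ n
      = (if n = 1 then 2 * z ^ n else 0) - of_real (coeff_bound b n) * z ^ n" for n
    by (simp add: left_diff_distrib)
  ultimately show "(\<lambda>n. ((if n = 1 then 2 else 0) - of_real (coeff_bound b n)) * z ^ n) sums f0 b z"
    by (simp add: f0_eq_majorant)
qed simp

lemma f0_in_class_F:
  assumes "0 \<le> b"
  shows "f0 b \<in> class_F b"
proof -
  have "f0 b holomorphic_on ball 0 1"
    unfolding f0_def by (intro holomorphic_intros) auto
  moreover have "deriv (f0 b) 0 = 1"
    using taylor_coeff_f0[of b 1] by (simp add: taylor_coeff_def coeff_bound_def)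
  ultimately show ?thesis
    using assms by (auto simp: class_F_def class_A_def f0_def taylor_coeff_f0 coeff_bound_def)
qed

lemma deriv_f0:
  assumes "norm z < 1"
  shows "deriv (f0 b) z = 2 - majorant' b z"
    and "deriv (deriv (f0 b)) z = - majorant'' b z"
proof -
  have f0': "(f0 b has_field_derivative 2 - majorant' b w) (at w)" if "norm w < 1" for w
    unfolding f0_eq_majorant[abs_def] using that
    by (auto intro!: derivative_eq_intros has_field_derivative_majorant)
  show "deriv (f0 b) z = 2 - majorant' b z"
    using f0'[OF assms] by (rule DERIV_imp_deriv)
  have "(deriv (f0 b) has_field_derivative - majorant'' b z) (at z)"
  proof (rule has_field_derivative_transform_within_open[where S = "ball 0 1"])
    show "((\<lambda>w. 2 - majorant' b w) has_field_derivative - majorant'' b z) (at z)"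
      using assms by (auto intro!: derivative_eq_intros has_field_derivative_majorant')
    show "2 - majorant' b w = deriv (f0 b) w" if "w \<in> ball 0 1" for w
      using f0' that by (auto intro: DERIV_imp_deriv[symmetric])
  qed (use assms in auto)
  then show "deriv (deriv (f0 b)) z = - majorant'' b z"
    by (rule DERIV_imp_deriv)
qed

lemma root_eq_iff_majorant:
  assumes "r < 1"
  shows "root_eq b \<alpha> r \<longleftrightarrow> r * majorant'' b r = (1 - \<alpha>) * (2 - majorant' b r)"
proof -
  have "r * majorant'' b r - (1 - \<alpha>) * (2 - majorant' b r)
      = (1 - \<alpha> + 4 * r + (1 + \<alpha>) * r\<^sup>2 - 2 * (1 - \<alpha> + 2 * (2 - \<alpha>) * (1 - b) * r) * (1 - r) ^ 4)
        / (1 - r) ^ 4"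
    using assms by (simp add: majorant'_def majorant''_def field_simps) (simp add: algebra_simps eval_nat_numeral)
  then show ?thesis
    using assms by (auto simp: root_eq_def)
qed

lemma majorant''_pos:
  assumes "0 \<le> b" "0 < r" "r < 1"
  shows "0 < majorant'' b (r::real)"
proof -
  have "4 + 2 * r \<le> (4 + 2 * r) / (1 - r) ^ 4"
    using assms by (simp add: le_divide_eq power_le_one)
  then show ?thesis
    using assms by (simp add: majorant''_def)
qed

lemma root_eq_imp_pos:
  assumes "0 \<le> b" "0 < r" "r < 1" "root_eq b \<alpha> r"
  shows "0 < (1 - \<alpha>) * (2 - majorant' b r)"
proof -
  have "r * majorant'' b r = (1 - \<alpha>) * (2 - majorant' b r)"
    using assms by (simp add: root_eq_iff_majorant)
  with majorant''_pos[OF assms(1-3)] assms(2) show ?thesis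
    by (metis mult_pos_pos)
qed

lemma class_F_deriv_ratio_bound:
  assumes b: "0 \<le> b" and \<alpha>: "\<alpha> < 1"
    and r0: "0 < r0" "r0 < 1" "root_eq b \<alpha> r0"
    and f: "f \<in> class_F b" and z: "cmod z \<le> r0"
  shows "deriv f z \<noteq> 0"
    and "cmod (z * deriv (deriv f) z / deriv f z) \<le> (1 - \<alpha>) * cmod z / r0"
proof -
  let ?D = "2 - majorant' b r0" and ?M = "majorant'' b r0"
  have holo: "f holomorphic_on ball 0 1" and f1: "deriv f 0 = 1"
    and coeff: "\<And>n. 2 \<le> n \<Longrightarrow> cmod (taylor_coeff f n) \<le> coeff_bound b n"
    using f by (auto simp: class_F_def class_A_def coeff_bound_def)
  have m1: "coeff_bound b 1 = 1"
    by (simp add: coeff_bound_def)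
  have "\<bar>r0\<bar> < 1"
    using r0 by simp
  note bounds = deriv_bounds_of_coeff_majorant[OF holo f1 m1 coeff z r0(2)
      sums_majorant'[OF this] sums_majorant''[OF this]]
  have f': "?D \<le> cmod (deriv f z)" and f'': "cmod (deriv (deriv f) z) \<le> ?M"
    using bounds by simp_all
  have balance: "r0 * ?M = (1 - \<alpha>) * ?D"
    using r0 by (simp add: root_eq_iff_majorant)
  have "0 < ?D"
    using root_eq_imp_pos[OF b r0] \<alpha> by (simp add: zero_less_mult_iff)
  then show nonzero: "deriv f z \<noteq> 0"
    using f' by auto
  have "cmod (z * deriv (deriv f) z) \<le> cmod z * ?M"
    using f'' by (simp add: norm_mult mult_left_mono)
  also have "\<dots> = cmod z * (r0 * ?M) / r0"
    using r0 by simp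
  also have "\<dots> = (1 - \<alpha>) * cmod z / r0 * ?D"
    unfolding balance by simp
  also have "\<dots> \<le> (1 - \<alpha>) * cmod z / r0 * cmod (deriv f z)"
    using f' \<alpha> r0 by (intro mult_left_mono) auto
  finally show "cmod (z * deriv (deriv f) z / deriv f z) \<le> (1 - \<alpha>) * cmod z / r0"
    using nonzero by (simp add: norm_divide divide_le_eq)
qed

lemma f0_deriv_ratio_at_root:
  assumes b: "0 \<le> b" and r0: "0 < r0" "r0 < 1" "root_eq b \<alpha> r0"
  shows "of_real r0 * deriv (deriv (f0 b)) (of_real r0) / deriv (f0 b) (of_real r0)
    = complex_of_real (\<alpha> - 1)"
proof -
  let ?D = "2 - majorant' b r0" and ?M = "majorant'' b r0"
  have balance: "r0 * ?M = (1 - \<alpha>) * ?D"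
    using r0 by (simp add: root_eq_iff_majorant)
  have "?D \<noteq> 0"
    using root_eq_imp_pos[OF b r0] by auto
  have "deriv (f0 b) (of_real r0) = of_real ?D"
    and "deriv (deriv (f0 b)) (of_real r0) = - of_real ?M"
    using deriv_f0[of "of_real r0" b] r0 by (simp_all add: majorant'_def majorant''_def)
  then have "of_real r0 * deriv (deriv (f0 b)) (of_real r0) / deriv (f0 b) (of_real r0)
      = complex_of_real (- (r0 * ?M) / ?D)"
    by simp
  also have "- (r0 * ?M) / ?D = \<alpha> - 1"
    using balance \<open>?D \<noteq> 0\<close> by (simp add: field_simps)
  finally show ?thesis .
qed

lemma radius_eqI:
  fixes P :: "(complex \<Rightarrow> complex) \<Rightarrow> complex \<Rightarrow> bool"
  assumes "0 < r0" "r0 \<le> 1"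
    and "\<And>f z. f \<in> F \<Longrightarrow> cmod z < r0 \<Longrightarrow> P f z"
    and "g \<in> F" "\<not> P g (of_real r0)"
  shows "Sup {r \<in> {0<..1}. \<forall>f\<in>F. \<forall>z. cmod z < r \<longrightarrow> P f z} = r0"
proof -
  have "{r \<in> {0<..1}. \<forall>f\<in>F. \<forall>z. cmod z < r \<longrightarrow> P f z} = {0<..r0}"
  proof (intro equalityI subsetI)
    fix r
    assume "r \<in> {r \<in> {0<..1}. \<forall>f\<in>F. \<forall>z. cmod z < r \<longrightarrow> P f z}"
    then show "r \<in> {0<..r0}"
      using assms(1,4,5) by (cases "r0 < r") (auto dest!: bspec[of _ _ g] spec[of _ "of_real r0"])
  qed (use assms in auto)
  then show ?thesis
    using assms by simp
qed

lemma Re_one_add_gt_of_norm_less: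
  assumes "cmod w < c"
  shows "1 - c < Re (1 + w)"
  using abs_Re_le_cmod[of w] assms by simp

lemma class_F_deriv_ratio_le:
  assumes "0 \<le> b" "\<alpha> < 1" "0 < r0" "r0 < 1" "root_eq b \<alpha> r0"
    and "f \<in> class_F b" "cmod z \<le> r0"
  shows "cmod (z * deriv (deriv f) z / deriv f z) \<le> 1 - \<alpha>"
proof -
  have "(1 - \<alpha>) * cmod z / r0 \<le> 1 - \<alpha>"
    using assms by (simp add: divide_le_eq mult_left_le)
  with class_F_deriv_ratio_bound(2)[OF assms] show ?thesis
    by linarith
qed

lemma class_F_deriv_ratio_less:
  assumes "0 \<le> b" "\<alpha> < 1" "0 < r0" "r0 < 1" "root_eq b \<alpha> r0"
    and "f \<in> class_F b" "cmod z < r0"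
  shows "deriv f z \<noteq> 0" and "cmod (z * deriv (deriv f) z / deriv f z) < 1 - \<alpha>"
proof -
  have "(1 - \<alpha>) * cmod z / r0 < 1 - \<alpha>"
    using assms by (simp add: divide_less_eq)
  with class_F_deriv_ratio_bound[OF assms(1-6), of z] assms(7)
  show "deriv f z \<noteq> 0" "cmod (z * deriv (deriv f) z / deriv f z) < 1 - \<alpha>"
    by auto
qed

lemma radius_convexity_order_class_F:
  assumes "0 \<le> b" "\<alpha> < 1" "0 < r0" "r0 < 1" "root_eq b \<alpha> r0"
  shows "radius_convexity_order \<alpha> (class_F b) = r0"
  unfolding radius_convexity_order_def
proof (rule radius_eqI[OF assms(3) _ _ f0_in_class_F[OF assms(1)]])
  fix f z
  assume "f \<in> class_F b" "cmod z < r0"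
  with class_F_deriv_ratio_less[OF assms] Re_one_add_gt_of_norm_less[of _ "1 - \<alpha>"]
  show "deriv f z \<noteq> 0 \<and> \<alpha> < Re (1 + z * deriv (deriv f) z / deriv f z)"
    by force
qed (use assms f0_deriv_ratio_at_root[OF assms(1,3-5)] in auto)

lemma radius_uniform_convexity_class_F:
  assumes "0 \<le> b" "0 < r1" "r1 < 1" "root_eq b (1 / 2) r1"
  shows "radius_uniform_convexity (class_F b) = r1"
  unfolding radius_uniform_convexity_def
proof (rule radius_eqI[OF assms(2) _ _ f0_in_class_F[OF assms(1)]])
  fix f z
  assume "f \<in> class_F b" "cmod z < r1"
  with class_F_deriv_ratio_less[of b "1 / 2", OF assms(1) _ assms(2-4)]
    Re_one_add_gt_of_norm_less[of _ "1 / 2"]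
  show "deriv f z \<noteq> 0 \<and>
      cmod (z * deriv (deriv f) z / deriv f z) < Re (1 + z * deriv (deriv f) z / deriv f z)"
    by force
qed (use assms f0_deriv_ratio_at_root[OF assms(1-4)] in auto)

theorem theorem3p1:
  fixes b \<alpha> r0 r1 :: real
  assumes hb: "0 \<le> b" "b \<le> 1"
    and h\<alpha>: "0 \<le> \<alpha>" "\<alpha> < 1"
    and hr0: "0 < r0" "r0 < 1" "root_eq b \<alpha> r0"
    and hr1: "0 < r1" "r1 < 1" "root_eq b (1/2) r1"
  shows "(\<forall>f\<in>class_F b. \<forall>z. cmod z \<le> r0 \<longrightarrow>
            cmod (z * deriv (deriv f) z / deriv f z) \<le> 1 - \<alpha>)
       \<and> radius_convexity_order \<alpha> (class_F b) = r0
       \<and> radius_uniform_convexity (class_F b) = r1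
       \<and> f0 b \<in> class_F b
       \<and> cmod (complex_of_real r0 * deriv (deriv (f0 b)) (complex_of_real r0)
                / deriv (f0 b) (complex_of_real r0)) = 1 - \<alpha>
       \<and> Re (complex_of_real r0 * deriv (deriv (f0 b)) (complex_of_real r0)
                / deriv (f0 b) (complex_of_real r0)) = \<alpha> - 1"
proof -
  have "complex_of_real r0 * deriv (deriv (f0 b)) (complex_of_real r0)
      / deriv (f0 b) (complex_of_real r0) = of_real (\<alpha> - 1)"
    using hb(1) hr0 by (rule f0_deriv_ratio_at_root)
  then show ?thesis
    using class_F_deriv_ratio_le[OF hb(1) h\<alpha>(2) hr0] f0_in_class_F[OF hb(1)] h\<alpha>
      radius_convexity_order_class_F[OF hb(1) h\<alpha>(2) hr0]
      radius_uniform_convexity_class_F[OF hb(1) hr1]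
    by (simp del: of_real_diff)
qed

end
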